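(* Let $A$ be a generalized ring and $\mathfrak a$ an h-ideal of $A$. Then $\bigcap_{\mathfrak p\in spec(A),\ \mathfrak p\supseteq\mathfrak a}\mathfrak p=\sqrt{\mathfrak a}$, where $\sqrt{\mathfrak a}=\{a\in A_{[1]}: a^n\in\mathfrak a\text{ for some }n>0\}$ (the empty intersection being $A_{[1]}$).
   Context: All sets $X,Y,Z,W$ below are finite. A partial map $f:X\rightharpoonup Y$ is a map $f:D(f)\to Y$ defined on a subset $D(f)\subseteq X$; $f^{-1}(y)\subseteq D(f)$ is its fibre, $Set_\bullet(X,Y)$ is the set of partial maps, composed as partial maps. $\mathbb F_\bullet$ is the category of finite sets with partial bijections as morphisms; $f^t$ is the inverse partial bijection. $[1]=\{1\}$ and $c_X:X\to[1]$ is the total map. A generalized ring $A$ consists of: (1) a functor $X\mapsto A_X$, $f\mapsto f_A$, from $\mathbb F_\bullet$ to pointed sets with $A_\emptyset=\{0\}$; for $f\in Set_\bullet(X,Y)$ put $A_f=\prod_{y\in Y}A_{f^{-1}(y)}$; so $A_{c_X}=A_X$, and $A_{id_X}$ is identified with $(A_{[1]})^X$. (2) For each $f\in Set_\bullet(X,Y)$ a multiplication $\circ:A_Y\times A_f\to A_X$ and a contraction $(\,,\,):A_X\times A_f\to A_Y$, both giving $0$ when an argument is $0$; for $g\in Set_\bullet(Y,Z)$ extended fibrewise to $\circ:A_g\times A_f\to A_{g\circ f}$ and $(\,,\,):A_{g\circ f}\times A_f\to A_g$ by $(a\circ b)^{(z)}=a^{(z)}\circ b|_z$, $(c,b)^{(z)}=(c^{(z)},b|_z)$,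 with $b|_z=(b^{(y)})_{y\in g^{-1}(z)}\in A_{f|_z}$, $f|_z:(g\circ f)^{-1}(z)\rightharpoonup g^{-1}(z)$ the restriction. (3) A unit $1\in A_{[1]}$, with transports $1_x\in A_{\{x\}}$ and, for partial bijections $f$, $1_f\in A_f$ with components $1_{f^t(y)}$ on the image and $0$ elsewhere. Axioms, for partial maps $W\xleftarrow{h}Z\xleftarrow{g}Y\xleftarrow{f}X$: $d\circ(c\circ b)=(d\circ c)\circ b$ ($d\in A_h,c\in A_g,b\in A_f$); $(d,a\circ c)=((d,c),a)$ ($d\in A_{h\circ g\circ f},a\in A_g,c\in A_f$); $(d\circ c,a)=(d,(a,c))$ ($d\in A_{h\circ g},a\in A_{g\circ f},c\in A_f$); $(d\circ a,c)=d\circ(a,c)$ ($d\in A_h,a\in A_{g\circ f},c\in A_f$); for $Z\xrightarrow{g}Y\xleftarrow{f}X$, $h\in Set_\bullet(Y,W)$, $P=\{(z,x)\in D(g)\times D(f):g(z)=f(x)\}$ with projections $\tilde f,\tilde g$, $\tilde c^{(z)}=c^{(g(z))}\in A_{\tilde f}$, $\tilde a^{(x)}=a^{(f(x))}\in A_{\tilde g}$: $(d,c)\circ a=(d\circ\tilde a,\tilde c)$ for $d\in A_{h\circ f},a\in A_g,c\in A_f$; $a\circ 1_{id_X}=1_{id_Y}\circ a=(a,1_{id_X})=a$ for $a\in A_f$; $a\circ 1_{f^t}=(a,1_f)=f_A(a)$ for $a\in A_X$, $f$ a partial bijection. $A_{[1]}$ is a commutative monoid under $\circ$ with unit $1$,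 powers $a^n$; we have $(\,,\,):A_X\times A_X\to A_{[1]}$ and $\circ:A_X\times(A_{[1]})^X\to A_X$. An h-ideal is a subset $\mathfrak a\subseteq A_{[1]}$ with $(b\circ c,d)\in\mathfrak a$ for all finite $X$, $b,d\in A_X$, $c\in\mathfrak a^X$; proper if $1\notin\mathfrak a$. A prime is a proper h-ideal $\mathfrak p$ with $a\circ b\in\mathfrak p\Rightarrow a\in\mathfrak p$ or $b\in\mathfrak p$; $spec(A)$ is the set of primes. *)

theory Defs
  imports Main "HOL-Library.Nat_Bijection"
begin

text \<open>Finite sets are modelled as finite sets of natural numbers; partial maps
  X \<rightharpoonup> Y as maps nat \<Rightarrow> nat option with domain in X and range in Y.
  [1] is the set {1}.  Elements of all A_X live in one type 'a; A_X is the
  carrier set carr R X with base point zer R X.  Elements of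
  A_f = prod_{y in Y} A_{f^{-1}(y)} are families nat \<Rightarrow> 'a, undefined outside Y.\<close>

record 'a gring =
  carr  :: "nat set \<Rightarrow> 'a set"
  zer   :: "nat set \<Rightarrow> 'a"
  amap  :: "nat set \<Rightarrow> nat set \<Rightarrow> (nat \<Rightarrow> nat option) \<Rightarrow> 'a \<Rightarrow> 'a"
  mult  :: "nat set \<Rightarrow> nat set \<Rightarrow> (nat \<Rightarrow> nat option) \<Rightarrow> 'a \<Rightarrow> (nat \<Rightarrow> 'a) \<Rightarrow> 'a"
  contr :: "nat set \<Rightarrow> nat set \<Rightarrow> (nat \<Rightarrow> nat option) \<Rightarrow> 'a \<Rightarrow> (nat \<Rightarrow> 'a) \<Rightarrow> 'a"
  one   :: 'a

definition pmap :: "nat set \<Rightarrow> nat set \<Rightarrow> (nat \<Rightarrow> nat option) \<Rightarrow> bool" where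
  "pmap X Y f \<longleftrightarrow> dom f \<subseteq> X \<and> ran f \<subseteq> Y"

definition pbij :: "nat set \<Rightarrow> nat set \<Rightarrow> (nat \<Rightarrow> nat option) \<Rightarrow> bool" where
  "pbij X Y f \<longleftrightarrow> pmap X Y f \<and> inj_on f (dom f)"

definition pid :: "nat set \<Rightarrow> nat \<Rightarrow> nat option" where
  "pid X = (\<lambda>x. if x \<in> X then Some x else None)"

definition cmap :: "nat set \<Rightarrow> nat \<Rightarrow> nat option" where
  "cmap X = (\<lambda>x. if x \<in> X then Some 1 else None)"

definition ptrans :: "(nat \<Rightarrow> nat option) \<Rightarrow> nat \<Rightarrow> nat option" where
  "ptrans f = (\<lambda>y. if y \<in> ran f then Some (THE x. f x = Some y) else None)"

definition fib :: "nat set \<Rightarrow> (nat \<Rightarrow> nat option) \<Rightarrow> nat \<Rightarrow> nat set" where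
  "fib X f y = {x \<in> X. f x = Some y}"

definition famset :: "'a gring \<Rightarrow> nat set \<Rightarrow> nat set \<Rightarrow> (nat \<Rightarrow> nat option) \<Rightarrow> (nat \<Rightarrow> 'a) set" where
  "famset R X Y f = {b. (\<forall>y\<in>Y. b y \<in> carr R (fib X f y)) \<and> (\<forall>y. y \<notin> Y \<longrightarrow> b y = undefined)}"

definition zfam :: "'a gring \<Rightarrow> nat set \<Rightarrow> nat set \<Rightarrow> (nat \<Rightarrow> nat option) \<Rightarrow> nat \<Rightarrow> 'a" where
  "zfam R X Y f = (\<lambda>y. if y \<in> Y then zer R (fib X f y) else undefined)"

definition frestr :: "nat set \<Rightarrow> (nat \<Rightarrow> 'a) \<Rightarrow> nat \<Rightarrow> 'a" where
  "frestr S b = (\<lambda>y. if y \<in> S then b y else undefined)"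

text \<open>fibrewise multiplication A_g \<times> A_f \<rightarrow> A_{g\<circ>f}, f : X \<rightharpoonup> Y, g : Y \<rightharpoonup> Z\<close>
definition fmult :: "'a gring \<Rightarrow> nat set \<Rightarrow> nat set \<Rightarrow> nat set \<Rightarrow> (nat \<Rightarrow> nat option)
    \<Rightarrow> (nat \<Rightarrow> nat option) \<Rightarrow> (nat \<Rightarrow> 'a) \<Rightarrow> (nat \<Rightarrow> 'a) \<Rightarrow> nat \<Rightarrow> 'a" where
  "fmult R X Y Z f g a b = (\<lambda>z. if z \<in> Z then
      mult R (fib X (g \<circ>\<^sub>m f) z) (fib Y g z) (f |` fib X (g \<circ>\<^sub>m f) z) (a z) (frestr (fib Y g z) b)
    else undefined)"

text \<open>fibrewise contraction A_{g\<circ>f} \<times> A_f \<rightarrow> A_g\<close>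
definition fcontr :: "'a gring \<Rightarrow> nat set \<Rightarrow> nat set \<Rightarrow> nat set \<Rightarrow> (nat \<Rightarrow> nat option)
    \<Rightarrow> (nat \<Rightarrow> nat option) \<Rightarrow> (nat \<Rightarrow> 'a) \<Rightarrow> (nat \<Rightarrow> 'a) \<Rightarrow> nat \<Rightarrow> 'a" where
  "fcontr R X Y Z f g c b = (\<lambda>z. if z \<in> Z then
      contr R (fib X (g \<circ>\<^sub>m f) z) (fib Y g z) (f |` fib X (g \<circ>\<^sub>m f) z) (c z) (frestr (fib Y g z) b)
    else undefined)"

definition onex :: "'a gring \<Rightarrow> nat \<Rightarrow> 'a" where
  "onex R x = amap R {1} {x} ((\<lambda>_. Some x) \<circ>\<^sub>m pid {1}) (one R)"

definition onefam :: "'a gring \<Rightarrow> nat set \<Rightarrow> nat set \<Rightarrow> (nat \<Rightarrow> nat option) \<Rightarrow> nat \<Rightarrow> 'a" where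
  "onefam R X Y f = (\<lambda>y. if y \<in> Y then
      (if y \<in> ran f then onex R (the (ptrans f y)) else zer R {}) else undefined)"

text \<open>identification (A_[1])^X \<cong> A_{id_X}\<close>
definition tofam :: "'a gring \<Rightarrow> nat set \<Rightarrow> (nat \<Rightarrow> 'a) \<Rightarrow> nat \<Rightarrow> 'a" where
  "tofam R X c = (\<lambda>x. if x \<in> X then amap R {1} {x} ((\<lambda>_. Some x) \<circ>\<^sub>m pid {1}) (c x) else undefined)"

text \<open>identification A_X = A_{c_X}\<close>
definition single :: "'a \<Rightarrow> nat \<Rightarrow> 'a" where
  "single a = (\<lambda>y. if y = 1 then a else undefined)"

text \<open>product on A_[1], the maps A_X \<times> (A_[1])^X \<rightarrow> A_X and A_X \<times> A_X \<rightarrow> A_[1]\<close>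
definition m1 :: "'a gring \<Rightarrow> 'a \<Rightarrow> 'a \<Rightarrow> 'a" where
  "m1 R a b = mult R {1} {1} (pid {1}) a (tofam R {1} (\<lambda>_. b))"

definition smul :: "'a gring \<Rightarrow> nat set \<Rightarrow> 'a \<Rightarrow> (nat \<Rightarrow> 'a) \<Rightarrow> 'a" where
  "smul R X b c = mult R X X (pid X) b (tofam R X c)"

definition pairing :: "'a gring \<Rightarrow> nat set \<Rightarrow> 'a \<Rightarrow> 'a \<Rightarrow> 'a" where
  "pairing R X b d = contr R X {1} (cmap X) b (single d)"

fun gpow :: "'a gring \<Rightarrow> 'a \<Rightarrow> nat \<Rightarrow> 'a" where
  "gpow R a 0 = one R"
| "gpow R a (Suc n) = m1 R a (gpow R a n)"

definition functor_ax :: "'a gring \<Rightarrow> bool" where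
  "functor_ax R \<longleftrightarrow>
     carr R {} = {zer R {}} \<and>
     (\<forall>X. finite X \<longrightarrow> zer R X \<in> carr R X) \<and>
     (\<forall>X Y f. finite X \<and> finite Y \<and> pbij X Y f \<longrightarrow>
        amap R X Y f ` carr R X \<subseteq> carr R Y \<and> amap R X Y f (zer R X) = zer R Y) \<and>
     (\<forall>X. finite X \<longrightarrow> (\<forall>a\<in>carr R X. amap R X X (pid X) a = a)) \<and>
     (\<forall>X Y Z f g. finite X \<and> finite Y \<and> finite Z \<and> pbij X Y f \<and> pbij Y Z g \<longrightarrow>
        (\<forall>a\<in>carr R X. amap R X Z (g \<circ>\<^sub>m f) a = amap R Y Z g (amap R X Y f a)))"

definition ops_ax :: "'a gring \<Rightarrow> bool" where
  "ops_ax R \<longleftrightarrow> one R \<in> carr R {1} \<and>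
     (\<forall>X Y f. finite X \<and> finite Y \<and> pmap X Y f \<longrightarrow>
        (\<forall>a\<in>carr R Y. \<forall>b\<in>famset R X Y f. mult R X Y f a b \<in> carr R X) \<and>
        (\<forall>a\<in>carr R X. \<forall>b\<in>famset R X Y f. contr R X Y f a b \<in> carr R Y) \<and>
        (\<forall>b\<in>famset R X Y f. mult R X Y f (zer R Y) b = zer R X) \<and>
        (\<forall>a\<in>carr R Y. mult R X Y f a (zfam R X Y f) = zer R X) \<and>
        (\<forall>b\<in>famset R X Y f. contr R X Y f (zer R X) b = zer R Y) \<and>
        (\<forall>a\<in>carr R X. contr R X Y f a (zfam R X Y f) = zer R Y))"

definition assoc_ax :: "'a gring \<Rightarrow> bool" where
  "assoc_ax R \<longleftrightarrow>
    (\<forall>X Y Z W f g h. finite X \<and> finite Y \<and> finite Z \<and> finite W \<and>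
       pmap X Y f \<and> pmap Y Z g \<and> pmap Z W h \<longrightarrow>
      (\<forall>d\<in>famset R Z W h. \<forall>c\<in>famset R Y Z g. \<forall>b\<in>famset R X Y f.
         fmult R X Z W (g \<circ>\<^sub>m f) h d (fmult R X Y Z f g c b)
         = fmult R X Y W f (h \<circ>\<^sub>m g) (fmult R Y Z W g h d c) b) \<and>
      (\<forall>d\<in>famset R X W (h \<circ>\<^sub>m g \<circ>\<^sub>m f). \<forall>a\<in>famset R Y Z g. \<forall>c\<in>famset R X Y f.
         fcontr R X Z W (g \<circ>\<^sub>m f) h d (fmult R X Y Z f g a c)
         = fcontr R Y Z W g h (fcontr R X Y W f (h \<circ>\<^sub>m g) d c) a) \<and>
      (\<forall>d\<in>famset R Y W (h \<circ>\<^sub>m g). \<forall>a\<in>famset R X Z (g \<circ>\<^sub>m f). \<forall>c\<in>famset R X Y f.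
         fcontr R X Z W (g \<circ>\<^sub>m f) h (fmult R X Y W f (h \<circ>\<^sub>m g) d c) a
         = fcontr R Y Z W g h d (fcontr R X Y Z f g a c)) \<and>
      (\<forall>d\<in>famset R Z W h. \<forall>a\<in>famset R X Z (g \<circ>\<^sub>m f). \<forall>c\<in>famset R X Y f.
         fcontr R X Y W f (h \<circ>\<^sub>m g) (fmult R X Z W (g \<circ>\<^sub>m f) h d a) c
         = fmult R Y Z W g h d (fcontr R X Y Z f g a c)))"

text \<open>Fibre product P of Z -g-> Y <-f- X, encoded in nat via prod_encode (z,x),
  with projections ft : P \<rightarrow> Z and gt : P \<rightarrow> X.\<close>
definition fprod :: "nat set \<Rightarrow> nat set \<Rightarrow> (nat \<Rightarrow> nat option) \<Rightarrow> (nat \<Rightarrow> nat option) \<Rightarrow> nat set" where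
  "fprod Z X g f = {prod_encode (z, x) | z x. z \<in> Z \<and> x \<in> X \<and> g z \<noteq> None \<and> g z = f x}"

definition proj1 :: "nat set \<Rightarrow> nat \<Rightarrow> nat option" where
  "proj1 P = (\<lambda>p. if p \<in> P then Some (fst (prod_decode p)) else None)"

definition proj2 :: "nat set \<Rightarrow> nat \<Rightarrow> nat option" where
  "proj2 P = (\<lambda>p. if p \<in> P then Some (snd (prod_decode p)) else None)"

text \<open>c~ \<in> A_{ft}: c~^(z) = c^(g z) transported along f^{-1}(g z) \<cong> ft^{-1}(z)\<close>
definition ctil :: "'a gring \<Rightarrow> nat set \<Rightarrow> nat set \<Rightarrow> (nat \<Rightarrow> nat option) \<Rightarrow> (nat \<Rightarrow> nat option)
    \<Rightarrow> (nat \<Rightarrow> 'a) \<Rightarrow> nat \<Rightarrow> 'a" where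
  "ctil R Z X g f c = (let P = fprod Z X g f in (\<lambda>z. if z \<in> Z then
     (case g z of None \<Rightarrow> zer R {}
      | Some y \<Rightarrow> amap R (fib X f y) (fib P (proj1 P) z)
          (\<lambda>x. if x \<in> fib X f y then Some (prod_encode (z, x)) else None) (c y))
     else undefined))"

text \<open>a~ \<in> A_{gt}: a~^(x) = a^(f x) transported along g^{-1}(f x) \<cong> gt^{-1}(x)\<close>
definition atil :: "'a gring \<Rightarrow> nat set \<Rightarrow> nat set \<Rightarrow> (nat \<Rightarrow> nat option) \<Rightarrow> (nat \<Rightarrow> nat option)
    \<Rightarrow> (nat \<Rightarrow> 'a) \<Rightarrow> nat \<Rightarrow> 'a" where
  "atil R Z X g f a = (let P = fprod Z X g f in (\<lambda>x. if x \<in> X then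
     (case f x of None \<Rightarrow> zer R {}
      | Some y \<Rightarrow> amap R (fib Z g y) (fib P (proj2 P) x)
          (\<lambda>z. if z \<in> fib Z g y then Some (prod_encode (z, x)) else None) (a y))
     else undefined))"

definition pullback_ax :: "'a gring \<Rightarrow> bool" where
  "pullback_ax R \<longleftrightarrow>
    (\<forall>X Y Z W f g h. finite X \<and> finite Y \<and> finite Z \<and> finite W \<and>
       pmap X Y f \<and> pmap Z Y g \<and> pmap Y W h \<longrightarrow>
      (\<forall>d\<in>famset R X W (h \<circ>\<^sub>m f). \<forall>a\<in>famset R Z Y g. \<forall>c\<in>famset R X Y f.
         let P = fprod Z X g f in
         fmult R Z Y W g h (fcontr R X Y W f h d c) a
         = fcontr R P Z W (proj1 P) (h \<circ>\<^sub>m g)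
             (fmult R P X W (proj2 P) (h \<circ>\<^sub>m f) d (atil R Z X g f a)) (ctil R Z X g f c)))"

definition unit_ax :: "'a gring \<Rightarrow> bool" where
  "unit_ax R \<longleftrightarrow>
    (\<forall>X Y f. finite X \<and> finite Y \<and> pmap X Y f \<longrightarrow>
       (\<forall>a\<in>famset R X Y f.
          fmult R X X Y (pid X) f a (onefam R X X (pid X)) = a \<and>
          fmult R X Y Y f (pid Y) (onefam R Y Y (pid Y)) a = a \<and>
          fcontr R X X Y (pid X) f a (onefam R X X (pid X)) = a)) \<and>
    (\<forall>X Y f. finite X \<and> finite Y \<and> pbij X Y f \<longrightarrow>
       (\<forall>a\<in>carr R X.
          mult R Y X (ptrans f) a (onefam R Y X (ptrans f)) = amap R X Y f a \<and>
          contr R X Y f a (onefam R X Y f) = amap R X Y f a))"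

text \<open>The context states that A_[1] is a commutative monoid under \<circ>.\<close>
definition comm_ax :: "'a gring \<Rightarrow> bool" where
  "comm_ax R \<longleftrightarrow> (\<forall>a\<in>carr R {1}. \<forall>b\<in>carr R {1}. m1 R a b = m1 R b a)"

definition gen_ring :: "'a gring \<Rightarrow> bool" where
  "gen_ring R \<longleftrightarrow> functor_ax R \<and> ops_ax R \<and> assoc_ax R \<and> pullback_ax R \<and> unit_ax R \<and> comm_ax R"

definition hideal :: "'a gring \<Rightarrow> 'a set \<Rightarrow> bool" where
  "hideal R I \<longleftrightarrow> I \<subseteq> carr R {1} \<and>
     (\<forall>X. finite X \<longrightarrow> (\<forall>b\<in>carr R X. \<forall>d\<in>carr R X. \<forall>c. (\<forall>x\<in>X. c x \<in> I) \<longrightarrow>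
        pairing R X (smul R X b c) d \<in> I))"

definition hprime :: "'a gring \<Rightarrow> 'a set \<Rightarrow> bool" where
  "hprime R p \<longleftrightarrow> hideal R p \<and> one R \<notin> p \<and>
     (\<forall>a\<in>carr R {1}. \<forall>b\<in>carr R {1}. m1 R a b \<in> p \<longrightarrow> a \<in> p \<or> b \<in> p)"

definition spec :: "'a gring \<Rightarrow> 'a set set" where
  "spec R = {p. hprime R p}"

definition hradical :: "'a gring \<Rightarrow> 'a set \<Rightarrow> 'a set" where
  "hradical R I = {a \<in> carr R {1}. \<exists>n>0. gpow R a n \<in> I}"

end

theory Submission
  imports Defs
begin

text \<open>If a^n \<in> \<aa> then every prime p \<supseteq> \<aa> contains a, since p is prime. Conversely, if no
  power of a lies in \<aa>, Zorn's lemma gives an h-ideal p \<supseteq> \<aa> maximal among those avoiding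
  all powers of a (unions of chains of h-ideals are h-ideals because the defining condition involves
  only finitely many elements). Such a p is prime: for s \<in> A_[1] the colon (p : s) = {x. x s \<in> p}
  is again an h-ideal -- the pullback axiom moves the factor s inside a contraction,
  (b \<circ> c, d) \<circ> s = (b \<circ> (c s)~, d~) -- so if u, v \<notin> p but u v \<in> p, maximality
  gives a^n v \<in> p and then a^m a^n \<in> p, a contradiction.\<close>

declare One_nat_def[simp del]

lemma finite_subset_Union_chain:
  assumes "finite X" "C \<noteq> {}" "\<forall>A\<in>C. \<forall>B\<in>C. A \<subseteq> B \<or> B \<subseteq> A" "\<forall>x\<in>X. c x \<in> \<Union>C"
  shows "\<exists>J\<in>C. \<forall>x\<in>X. c x \<in> J"
  using assms
proof (induction X rule: finite_induct)
  case empty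
  then show ?case by blast
next
  case (insert x F)
  then obtain J1 where J1: "J1 \<in> C" "\<forall>y\<in>F. c y \<in> J1" by blast
  obtain J2 where J2: "J2 \<in> C" "c x \<in> J2" using insert.prems by blast
  from insert.prems(2) J1(1) J2(1) have "J1 \<subseteq> J2 \<or> J2 \<subseteq> J1" by blast
  then show ?case using J1 J2 by blast
qed

section \<open>One-point maps and the fibre product over [1]\<close>

definition point_map :: "nat \<Rightarrow> nat \<Rightarrow> nat \<Rightarrow> nat option" where
  "point_map a b = (\<lambda>y. if y = a then Some b else None)"

definition point_fam :: "nat \<Rightarrow> 'a \<Rightarrow> nat \<Rightarrow> 'a" where
  "point_fam u x = (\<lambda>y. if y = u then x else undefined)"

lemma pid_singleton: "pid {v} = point_map v v"
  by (auto simp: pid_def point_map_def)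

lemma cmap_singleton: "cmap {v} = point_map v 1"
  by (auto simp: cmap_def point_map_def)

lemma const_comp_pid_one: "(\<lambda>_. Some x) \<circ>\<^sub>m pid {1} = point_map 1 x"
  by (auto simp: pid_def point_map_def map_comp_def)

lemma single_eq_point_fam: "single = point_fam 1"
  by (auto simp: single_def point_fam_def)

lemma point_map_comp [simp]: "point_map b c \<circ>\<^sub>m point_map a b = point_map a c"
  by (auto simp: map_comp_def point_map_def)

lemma point_map_apply [simp]: "point_map a b a = Some b"
  by (simp add: point_map_def)

lemma ptrans_point_map [simp]: "ptrans (point_map a b) = point_map b a"
  by (auto simp: ptrans_def point_map_def ran_def fun_eq_iff)

lemma dom_point_map [simp]: "dom (point_map a b) = {a}"
  by (auto simp: point_map_def dom_def)

lemma ran_point_map [simp]: "ran (point_map a b) = {b}"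
  by (auto simp: point_map_def ran_def)

lemma pmap_point_map [simp]: "pmap {a} {b} (point_map a b)"
  by (simp add: pmap_def)

lemma pbij_point_map [simp]: "pbij {a} {b} (point_map a b)"
  by (simp add: pbij_def)

lemma fib_point_map [simp]: "fib {a} (point_map a b) b = {a}"
  by (auto simp: fib_def point_map_def)

lemma restrict_point_map [simp]: "point_map a b |` {a} = point_map a b"
  by (auto simp: point_map_def restrict_map_def)

lemma point_fam_apply [simp]: "point_fam u x u = x"
  by (simp add: point_fam_def)

lemma point_fam_eq_iff: "point_fam u x = point_fam u y \<longleftrightarrow> x = y"
  by (metis point_fam_apply)

lemma frestr_singleton: "frestr {x} f = point_fam x (f x)"
  by (auto simp: frestr_def point_fam_def fun_eq_iff)

lemma frestr_point_fam [simp]: "frestr {u} (point_fam u x) = point_fam u x"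
  by (simp add: frestr_singleton)

lemma point_fam_famset: "x \<in> carr R (fib X f u) \<Longrightarrow> point_fam u x \<in> famset R X {u} f"
  by (auto simp: famset_def point_fam_def)

lemma fmult_singleton: "fmult R X Y {z} f g a b = point_fam z
    (mult R (fib X (g \<circ>\<^sub>m f) z) (fib Y g z) (f |` fib X (g \<circ>\<^sub>m f) z) (a z) (frestr (fib Y g z) b))"
  by (auto simp: fmult_def point_fam_def fun_eq_iff)

lemma fcontr_singleton: "fcontr R X Y {z} f g a b = point_fam z
    (contr R (fib X (g \<circ>\<^sub>m f) z) (fib Y g z) (f |` fib X (g \<circ>\<^sub>m f) z) (a z) (frestr (fib Y g z) b))"
  by (auto simp: fcontr_def point_fam_def fun_eq_iff)

lemma frestr_restrict_fam: "frestr S (\<lambda>x. if x \<in> S then g x else undefined) = (\<lambda>x. if x \<in> S then g x else undefined)"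
  by (auto simp: frestr_def fun_eq_iff)

lemma frestr_fmult: "frestr X (fmult R A B X f g a b) = fmult R A B X f g a b"
  by (auto simp: frestr_def fmult_def fun_eq_iff)

lemma frestr_tofam: "frestr X (tofam R X c) = tofam R X c"
  by (auto simp: frestr_def tofam_def fun_eq_iff)

lemma tofam_apply: "x \<in> X \<Longrightarrow> tofam R X c x = amap R {1} {x} (point_map 1 x) (c x)"
  by (simp add: tofam_def const_comp_pid_one)

lemma pmap_cmap: "pmap X {1} (cmap X)"
  by (auto simp: pmap_def cmap_def ran_def dom_def split: if_splits)

lemma pmap_pid: "pmap X X (pid X)"
  by (auto simp: pmap_def pid_def ran_def dom_def split: if_splits)

lemma fib_pid: "x \<in> X \<Longrightarrow> fib X (pid X) x = {x}"
  by (auto simp: fib_def pid_def)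

lemma restrict_pid: "pid X |` X = pid X"
  by (auto simp: pid_def restrict_map_def fun_eq_iff)

lemma restrict_pid_singleton: "p \<in> P \<Longrightarrow> pid P |` {p} = point_map p p"
  by (auto simp: pid_def point_map_def restrict_map_def fun_eq_iff)

lemma cmap_comp_pid: "cmap X \<circ>\<^sub>m pid X = cmap X"
  by (auto simp: pid_def cmap_def map_comp_def fun_eq_iff)

lemma point_map_comp_cmap: "point_map 1 1 \<circ>\<^sub>m cmap X = cmap X"
  by (auto simp: point_map_def cmap_def map_comp_def fun_eq_iff)

lemma fib_cmap: "fib X (cmap X) 1 = X"
  by (auto simp: fib_def cmap_def)

lemma restrict_cmap: "cmap X |` X = cmap X"
  by (auto simp: cmap_def restrict_map_def fun_eq_iff)

definition pair_one :: "nat \<Rightarrow> nat" where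
  "pair_one x = prod_encode (1, x)"

definition pair_one_map :: "nat set \<Rightarrow> nat \<Rightarrow> nat option" where
  "pair_one_map X = (\<lambda>x. if x \<in> X then Some (pair_one x) else None)"

lemma pair_one_eq_iff [simp]: "pair_one x = pair_one y \<longleftrightarrow> x = y"
  by (simp add: pair_one_def)

lemma snd_prod_decode_pair_one [simp]: "snd (prod_decode (pair_one x)) = x"
  by (simp add: pair_one_def)

lemma fst_prod_decode_pair_one [simp]: "fst (prod_decode (pair_one x)) = 1"
  by (simp add: pair_one_def)

lemma pbij_pair_one_map: "pbij X (pair_one ` X) (pair_one_map X)"
  by (auto simp: pbij_def pmap_def pair_one_map_def ran_def dom_def inj_on_def split: if_splits)

lemma fprod_point_map_cmap: "fprod {1} X (point_map 1 1) (cmap X) = pair_one ` X"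
  by (auto simp: fprod_def point_map_def cmap_def pair_one_def)

lemma proj1_pair_one: "proj1 (pair_one ` X) = cmap (pair_one ` X)"
  by (auto simp: proj1_def cmap_def fun_eq_iff)

lemma cmap_comp_proj2: "cmap X \<circ>\<^sub>m proj2 (pair_one ` X) = cmap (pair_one ` X)"
  by (auto simp: proj2_def cmap_def map_comp_def fun_eq_iff)

lemma pid_comp_proj2: "pid X \<circ>\<^sub>m proj2 (pair_one ` X) = proj2 (pair_one ` X)"
  by (auto simp: proj2_def pid_def map_comp_def fun_eq_iff)

lemma proj2_comp_pid: "proj2 P \<circ>\<^sub>m pid P = proj2 P"
  by (auto simp: pid_def proj2_def map_comp_def fun_eq_iff)

lemma restrict_proj2: "proj2 P |` P = proj2 P"
  by (auto simp: proj2_def restrict_map_def fun_eq_iff)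

lemma restrict_proj2_singleton:
  "x \<in> X \<Longrightarrow> proj2 (pair_one ` X) |` {pair_one x} = point_map (pair_one x) x"
  by (auto simp: proj2_def point_map_def restrict_map_def fun_eq_iff)

lemma fib_proj2_pair_one: "x \<in> X \<Longrightarrow> fib (pair_one ` X) (proj2 (pair_one ` X)) x = {pair_one x}"
  by (auto simp: fib_def proj2_def)

lemma pmap_proj2_pair_one: "pmap (pair_one ` X) X (proj2 (pair_one ` X))"
  by (auto simp: pmap_def proj2_def ran_def dom_def split: if_splits)

definition const_fam :: "'a gring \<Rightarrow> nat set \<Rightarrow> 'a \<Rightarrow> nat \<Rightarrow> 'a" where
  "const_fam R X t = (\<lambda>x. if x \<in> X then amap R {1} {pair_one x} (point_map 1 (pair_one x)) t else undefined)"

lemma frestr_const_fam: "frestr X (const_fam R X t) = const_fam R X t"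
  by (simp add: const_fam_def frestr_restrict_fam)

lemma atil_point_fam: "atil R {1} X (point_map 1 1) (cmap X) (point_fam 1 s) = const_fam R X s"
proof (rule ext)
  fix x
  show "atil R {1} X (point_map 1 1) (cmap X) (point_fam 1 s) x = const_fam R X s x"
  proof (cases "x \<in> X")
    case True
    have "(\<lambda>z. if z = 1 then Some (prod_encode (z, x)) else None) = point_map 1 (pair_one x)"
      by (auto simp: point_map_def pair_one_def fun_eq_iff)
    with True show ?thesis
      unfolding atil_def Let_def fprod_point_map_cmap
      by (simp add: const_fam_def cmap_def fib_proj2_pair_one)
  qed (simp add: atil_def const_fam_def Let_def)
qed

lemma ctil_point_fam:
  "ctil R {1} X (point_map 1 1) (cmap X) (point_fam 1 d) = point_fam 1 (amap R X (pair_one ` X) (pair_one_map X) d)"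
proof -
  have "(\<lambda>x. if x \<in> X then Some (prod_encode (1, x)) else None) = pair_one_map X"
    by (auto simp: pair_one_map_def pair_one_def fun_eq_iff)
  moreover have "fib (pair_one ` X) (proj1 (pair_one ` X)) 1 = pair_one ` X"
    by (auto simp: fib_def proj1_pair_one cmap_def)
  ultimately show ?thesis
    unfolding ctil_def Let_def fprod_point_map_cmap
    by (auto simp: point_fam_def fun_eq_iff point_map_def fib_cmap)
qed

locale generalized_ring =
  fixes R :: "'a gring"
  assumes gen_ring: "gen_ring R"
begin

lemma amap_carr:
  "\<lbrakk>finite X; finite Y; pbij X Y f; a \<in> carr R X\<rbrakk> \<Longrightarrow> amap R X Y f a \<in> carr R Y"
  using gen_ring unfolding gen_ring_def functor_ax_def by (meson image_subset_iff)

lemma amap_pid: "\<lbrakk>finite X; a \<in> carr R X\<rbrakk> \<Longrightarrow> amap R X X (pid X) a = a"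
  using gen_ring unfolding gen_ring_def functor_ax_def by meson

lemma amap_comp:
  "\<lbrakk>finite X; finite Y; finite Z; pbij X Y f; pbij Y Z g; a \<in> carr R X\<rbrakk>
    \<Longrightarrow> amap R X Z (g \<circ>\<^sub>m f) a = amap R Y Z g (amap R X Y f a)"
  using gen_ring unfolding gen_ring_def functor_ax_def by meson

lemma one_carr: "one R \<in> carr R {1}"
  using gen_ring unfolding gen_ring_def ops_ax_def by meson

lemma mult_carr:
  "\<lbrakk>finite X; finite Y; pmap X Y f; a \<in> carr R Y; b \<in> famset R X Y f\<rbrakk> \<Longrightarrow> mult R X Y f a b \<in> carr R X"
  using gen_ring unfolding gen_ring_def ops_ax_def by meson

lemma contr_carr:
  "\<lbrakk>finite X; finite Y; pmap X Y f; a \<in> carr R X; b \<in> famset R X Y f\<rbrakk> \<Longrightarrow> contr R X Y f a b \<in> carr R Y"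
  using gen_ring unfolding gen_ring_def ops_ax_def by meson

lemma fmult_assoc:
  assumes "finite X" "finite Y" "finite Z" "finite W" "pmap X Y f" "pmap Y Z g" "pmap Z W h"
    and "d \<in> famset R Z W h" "c \<in> famset R Y Z g" "b \<in> famset R X Y f"
  shows "fmult R X Z W (g \<circ>\<^sub>m f) h d (fmult R X Y Z f g c b)
       = fmult R X Y W f (h \<circ>\<^sub>m g) (fmult R Y Z W g h d c) b"
  using gen_ring assms unfolding gen_ring_def assoc_ax_def by meson

lemma fmult_fcontr_pullback:
  assumes "finite X" "finite Y" "finite Z" "finite W" "pmap X Y f" "pmap Z Y g" "pmap Y W h"
    and "d \<in> famset R X W (h \<circ>\<^sub>m f)" "a \<in> famset R Z Y g" "c \<in> famset R X Y f"
  shows "fmult R Z Y W g h (fcontr R X Y W f h d c) a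
       = fcontr R (fprod Z X g f) Z W (proj1 (fprod Z X g f)) (h \<circ>\<^sub>m g)
           (fmult R (fprod Z X g f) X W (proj2 (fprod Z X g f)) (h \<circ>\<^sub>m f) d (atil R Z X g f a))
           (ctil R Z X g f c)"
  using gen_ring assms unfolding gen_ring_def pullback_ax_def Let_def by meson

lemma fmult_onefam_right:
  "\<lbrakk>finite X; finite Y; pmap X Y f; a \<in> famset R X Y f\<rbrakk>
    \<Longrightarrow> fmult R X X Y (pid X) f a (onefam R X X (pid X)) = a"
  using gen_ring unfolding gen_ring_def unit_ax_def by meson

lemma fmult_onefam_left:
  "\<lbrakk>finite X; finite Y; pmap X Y f; a \<in> famset R X Y f\<rbrakk>
    \<Longrightarrow> fmult R X Y Y f (pid Y) (onefam R Y Y (pid Y)) a = a"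
  using gen_ring unfolding gen_ring_def unit_ax_def by meson

lemma fcontr_onefam:
  "\<lbrakk>finite X; finite Y; pmap X Y f; a \<in> famset R X Y f\<rbrakk>
    \<Longrightarrow> fcontr R X X Y (pid X) f a (onefam R X X (pid X)) = a"
  using gen_ring unfolding gen_ring_def unit_ax_def by meson

lemma mult_onefam_ptrans:
  "\<lbrakk>finite X; finite Y; pbij X Y f; a \<in> carr R X\<rbrakk>
    \<Longrightarrow> mult R Y X (ptrans f) a (onefam R Y X (ptrans f)) = amap R X Y f a"
  using gen_ring unfolding gen_ring_def unit_ax_def by meson

lemma m1_commute: "\<lbrakk>a \<in> carr R {1}; b \<in> carr R {1}\<rbrakk> \<Longrightarrow> m1 R a b = m1 R b a"
  using gen_ring unfolding gen_ring_def comm_ax_def by meson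

section \<open>The monoid A_[1]\<close>

lemma amap_point_carr: "a \<in> carr R {1} \<Longrightarrow> amap R {1} {v} (point_map 1 v) a \<in> carr R {v}"
  by (rule amap_carr) auto

lemma amap_point_inverse: "a \<in> carr R {u} \<Longrightarrow> amap R {v} {u} (point_map v u) (amap R {u} {v} (point_map u v) a) = a"
  using amap_comp[of "{u}" "{v}" "{u}" "point_map u v" "point_map v u" a] amap_pid[of "{u}" a]
  by (simp add: pid_singleton)

lemma onex_eq: "onex R x = amap R {1} {x} (point_map 1 x) (one R)"
  unfolding onex_def const_comp_pid_one ..

lemma onex_one: "onex R 1 = one R"
  using amap_pid[of "{1}" "one R"] one_carr by (simp add: onex_eq pid_singleton)

lemma onex_carr: "onex R x \<in> carr R {x}"
  unfolding onex_eq by (rule amap_point_carr[OF one_carr])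

lemma onefam_point_map: "onefam R {a} {b} (point_map a b) = point_fam b (onex R a)"
  by (auto simp: onefam_def point_fam_def fun_eq_iff)

lemma point_fam_famset_point_map: "x \<in> carr R {a} \<Longrightarrow> point_fam b x \<in> famset R {a} {b} (point_map a b)"
  by (rule point_fam_famset) simp

lemma m1_eq_mult: "b \<in> carr R {1} \<Longrightarrow> m1 R a b = mult R {1} {1} (point_map 1 1) a (point_fam 1 b)"
proof -
  assume b: "b \<in> carr R {1}"
  have "tofam R {1} (\<lambda>_. b) = point_fam 1 b"
    using amap_pid[OF _ b] unfolding tofam_def point_fam_def const_comp_pid_one
    by (auto simp: pid_singleton fun_eq_iff)
  then show ?thesis by (simp add: m1_def pid_singleton)
qed

lemma m1_carr: "\<lbrakk>a \<in> carr R {1}; b \<in> carr R {1}\<rbrakk> \<Longrightarrow> m1 R a b \<in> carr R {1}"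
  by (simp add: m1_eq_mult) (rule mult_carr, auto intro: point_fam_famset_point_map)

lemma m1_one: "a \<in> carr R {1} \<Longrightarrow> m1 R a (one R) = a"
proof -
  assume a: "a \<in> carr R {1}"
  have "fmult R {1} {1} {1} (pid {1}) (point_map 1 1) (point_fam 1 a) (onefam R {1} {1} (pid {1})) = point_fam 1 a"
    by (rule fmult_onefam_right) (auto intro: point_fam_famset_point_map a)
  then show ?thesis
    by (simp add: pid_singleton onefam_point_map onex_one fmult_singleton m1_eq_mult one_carr point_fam_eq_iff)
qed

lemma one_m1: "a \<in> carr R {1} \<Longrightarrow> m1 R (one R) a = a"
  using m1_commute[OF one_carr] m1_one by simp

lemma m1_assoc:
  assumes a: "a \<in> carr R {1}" and b: "b \<in> carr R {1}" and c: "c \<in> carr R {1}"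
  shows "m1 R a (m1 R b c) = m1 R (m1 R a b) c"
proof -
  let ?pt = "point_map 1 1" and ?fm = "fmult R {1} {1} {1}"
  have "?fm (?pt \<circ>\<^sub>m ?pt) ?pt (point_fam 1 a) (?fm ?pt ?pt (point_fam 1 b) (point_fam 1 c))
      = ?fm ?pt (?pt \<circ>\<^sub>m ?pt) (?fm ?pt ?pt (point_fam 1 a) (point_fam 1 b)) (point_fam 1 c)"
    by (rule fmult_assoc) (auto intro: point_fam_famset_point_map a b c)
  then show ?thesis
    by (simp add: fmult_singleton m1_eq_mult[symmetric] a b c m1_carr point_fam_eq_iff)
qed

lemma gpow_carr: "a \<in> carr R {1} \<Longrightarrow> gpow R a n \<in> carr R {1}"
  by (induction n) (auto simp: one_carr m1_carr)

lemma gpow_add: "a \<in> carr R {1} \<Longrightarrow> m1 R (gpow R a m) (gpow R a n) = gpow R a (m + n)"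
  by (induction m) (auto simp: one_m1 gpow_carr m1_assoc[symmetric])

lemma gpow_Suc_0: "a \<in> carr R {1} \<Longrightarrow> gpow R a (Suc 0) = a"
  by (simp add: m1_one)

lemma mult_amap_point_left:
  assumes a: "\<alpha> \<in> carr R {1}" and b: "\<beta> \<in> carr R {1}"
  shows "mult R {1} {u} (point_map 1 u) (amap R {1} {u} (point_map 1 u) \<alpha>) (point_fam u \<beta>) = m1 R \<alpha> \<beta>"
proof -
  have transport: "amap R {1} {u} (point_map 1 u) \<alpha> = mult R {u} {1} (point_map u 1) \<alpha> (point_fam 1 (onex R u))"
    using mult_onefam_ptrans[of "{1}" "{u}" "point_map 1 u" \<alpha>] a by (simp add: onefam_point_map)
  define Q where "Q = mult R {1} {u} (point_map 1 u) (onex R u) (point_fam u \<beta>)"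
  have "fmult R {1} {u} {u} (point_map 1 u) (pid {u}) (onefam R {u} {u} (pid {u})) (point_fam u \<beta>) = point_fam u \<beta>"
    by (rule fmult_onefam_left) (auto intro: point_fam_famset_point_map b)
  then have Q: "Q = \<beta>"
    by (simp add: pid_singleton onefam_point_map fmult_singleton Q_def point_fam_eq_iff)
  have "fmult R {1} {1} {1} (point_map u 1 \<circ>\<^sub>m point_map 1 u) (point_map 1 1) (point_fam 1 \<alpha>)
          (fmult R {1} {u} {1} (point_map 1 u) (point_map u 1) (point_fam 1 (onex R u)) (point_fam u \<beta>))
      = fmult R {1} {u} {1} (point_map 1 u) (point_map 1 1 \<circ>\<^sub>m point_map u 1)
          (fmult R {u} {1} {1} (point_map u 1) (point_map 1 1) (point_fam 1 \<alpha>) (point_fam 1 (onex R u)))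
          (point_fam u \<beta>)"
    by (rule fmult_assoc) (auto intro: point_fam_famset_point_map a b onex_carr)
  then have "mult R {1} {u} (point_map 1 u) (amap R {1} {u} (point_map 1 u) \<alpha>) (point_fam u \<beta>)
      = mult R {1} {1} (point_map 1 1) \<alpha> (point_fam 1 Q)"
    by (simp add: fmult_singleton Q_def transport point_fam_eq_iff)
  also have "\<dots> = m1 R \<alpha> \<beta>"
    using m1_eq_mult[OF b] Q by simp
  finally show ?thesis .
qed

lemma mult_amap_point:
  assumes a: "\<alpha> \<in> carr R {1}" and b: "\<beta> \<in> carr R {1}"
  shows "mult R {v} {u} (point_map v u) (amap R {1} {u} (point_map 1 u) \<alpha>)
           (point_fam u (amap R {1} {v} (point_map 1 v) \<beta>))
       = amap R {1} {v} (point_map 1 v) (m1 R \<alpha> \<beta>)"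
proof -
  let ?a = "amap R {1} {u} (point_map 1 u) \<alpha>" and ?b = "amap R {1} {v} (point_map 1 v) \<beta>"
  define L where "L = mult R {v} {u} (point_map v u) ?a (point_fam u ?b)"
  have L_carr: "L \<in> carr R {v}" unfolding L_def
    by (rule mult_carr) (auto intro: point_fam_famset_point_map amap_point_carr a b)
  have amap_to_one: "amap R {v} {1} (point_map v 1) z = mult R {1} {v} (point_map 1 v) z (point_fam v (one R))"
    if "z \<in> carr R {v}" for z
    using mult_onefam_ptrans[of "{v}" "{1}" "point_map v 1" z] that by (simp add: onefam_point_map onex_one)
  have "fmult R {1} {u} {1} (point_map v u \<circ>\<^sub>m point_map 1 v) (point_map u 1) (point_fam 1 ?a)
          (fmult R {1} {v} {u} (point_map 1 v) (point_map v u) (point_fam u ?b) (point_fam v (one R)))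
      = fmult R {1} {v} {1} (point_map 1 v) (point_map u 1 \<circ>\<^sub>m point_map v u)
          (fmult R {v} {u} {1} (point_map v u) (point_map u 1) (point_fam 1 ?a) (point_fam u ?b))
          (point_fam v (one R))"
    by (rule fmult_assoc) (auto intro: point_fam_famset_point_map a b one_carr amap_point_carr)
  then have "mult R {1} {u} (point_map 1 u) ?a (point_fam u (amap R {v} {1} (point_map v 1) ?b))
      = amap R {v} {1} (point_map v 1) L"
    by (simp add: fmult_singleton L_def[symmetric] amap_to_one[symmetric] L_carr amap_point_carr b point_fam_eq_iff)
  then have "amap R {v} {1} (point_map v 1) L = m1 R \<alpha> \<beta>"
    by (simp add: amap_point_inverse b mult_amap_point_left a)
  then show ?thesis
    using amap_point_inverse[OF L_carr] L_def by metis
qed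

section \<open>h-ideals and colon ideals\<close>

lemma tofam_famset: "(\<And>x. x \<in> X \<Longrightarrow> c x \<in> carr R {1}) \<Longrightarrow> tofam R X c \<in> famset R X X (pid X)"
  by (auto simp: famset_def fib_pid tofam_apply amap_point_carr) (simp add: tofam_def)

lemma smul_carr:
  "\<lbrakk>finite X; b \<in> carr R X; \<And>x. x \<in> X \<Longrightarrow> c x \<in> carr R {1}\<rbrakk> \<Longrightarrow> smul R X b c \<in> carr R X"
  unfolding smul_def by (rule mult_carr[OF _ _ pmap_pid _ tofam_famset]) auto

lemma pairing_carr: "\<lbrakk>finite X; e \<in> carr R X; d \<in> carr R X\<rbrakk> \<Longrightarrow> pairing R X e d \<in> carr R {1}"
  unfolding pairing_def single_eq_point_fam
  by (rule contr_carr[OF _ _ pmap_cmap]) (auto intro: point_fam_famset simp: fib_cmap)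

lemma pairing_one_right: "z \<in> carr R {1} \<Longrightarrow> pairing R {1} z (one R) = z"
proof -
  assume z: "z \<in> carr R {1}"
  have "fcontr R {1} {1} {1} (pid {1}) (point_map 1 1) (point_fam 1 z) (onefam R {1} {1} (pid {1})) = point_fam 1 z"
    by (rule fcontr_onefam) (auto intro: point_fam_famset_point_map z)
  then show ?thesis
    by (simp add: pairing_def cmap_singleton single_eq_point_fam pid_singleton onefam_point_map onex_one
        fcontr_singleton point_fam_eq_iff)
qed

lemma hideal_carr: "hideal R J \<Longrightarrow> J \<subseteq> carr R {1}"
  by (simp add: hideal_def)

lemma hidealD:
  "\<lbrakk>hideal R J; finite X; b \<in> carr R X; d \<in> carr R X; \<And>x. x \<in> X \<Longrightarrow> c x \<in> J\<rbrakk>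
    \<Longrightarrow> pairing R X (smul R X b c) d \<in> J"
  unfolding hideal_def by blast

lemma hideal_m1_closed:
  assumes J: "hideal R J" and x: "x \<in> J" and b: "b \<in> carr R {1}"
  shows "m1 R b x \<in> J"
proof -
  have "pairing R {1} (smul R {1} b (\<lambda>_. x)) (one R) \<in> J"
    by (rule hidealD[OF J]) (auto simp: x b one_carr)
  moreover have "smul R {1} b (\<lambda>_. x) = m1 R b x"
    by (simp add: smul_def m1_def)
  moreover have "x \<in> carr R {1}"
    using hideal_carr[OF J] x by blast
  ultimately show ?thesis
    using pairing_one_right m1_carr[OF b] by simp
qed

lemma hideal_carr_if_one: "\<lbrakk>hideal R J; one R \<in> J; a \<in> carr R {1}\<rbrakk> \<Longrightarrow> a \<in> J"
  using hideal_m1_closed m1_one by metis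

lemma const_fam_famset:
  "t \<in> carr R {1} \<Longrightarrow> const_fam R X t \<in> famset R (pair_one ` X) X (proj2 (pair_one ` X))"
  by (auto simp: famset_def const_fam_def fib_proj2_pair_one amap_point_carr)

text \<open>The pullback axiom for Z = [1]; the fibre product of id_[1] and c_X is the copy
  pair_one ` X of X, and every fibre of its projection to X is a single point.\<close>
lemma m1_pairing_eq_pairing_pullback:
  assumes X: "finite X" and e: "e \<in> carr R X" and d: "d \<in> carr R X" and s: "s \<in> carr R {1}"
  shows "m1 R (pairing R X e d) s
       = pairing R (pair_one ` X) (mult R (pair_one ` X) X (proj2 (pair_one ` X)) e (const_fam R X s))
           (amap R X (pair_one ` X) (pair_one_map X) d)"
proof -
  let ?pt = "point_map 1 1" and ?F = "fprod {1} X (point_map 1 1) (cmap X)"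
  have fams: "point_fam 1 e \<in> famset R X {1} (cmap X)" "point_fam 1 d \<in> famset R X {1} (cmap X)"
    by (auto intro!: point_fam_famset simp: fib_cmap e d)
  have "fmult R {1} {1} {1} ?pt ?pt (fcontr R X {1} {1} (cmap X) ?pt (point_fam 1 e) (point_fam 1 d)) (point_fam 1 s)
      = fcontr R ?F {1} {1} (proj1 ?F) (?pt \<circ>\<^sub>m ?pt)
          (fmult R ?F X {1} (proj2 ?F) (?pt \<circ>\<^sub>m cmap X) (point_fam 1 e)
             (atil R {1} X ?pt (cmap X) (point_fam 1 s))) (ctil R {1} X ?pt (cmap X) (point_fam 1 d))"
    by (rule fmult_fcontr_pullback) (auto simp: X pmap_cmap point_map_comp_cmap fams intro: point_fam_famset_point_map s)
  then show ?thesis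
    by (simp add: atil_point_fam ctil_point_fam fprod_point_map_cmap point_map_comp_cmap fcontr_singleton
        fmult_singleton fib_cmap restrict_cmap cmap_comp_proj2 restrict_proj2 proj1_pair_one
        m1_eq_mult[symmetric] s pairing_def single_eq_point_fam frestr_const_fam point_fam_eq_iff)
qed

text \<open>Both sides are fibrewise products over one-point sets, computed by mult_amap_point.\<close>
lemma fmult_tofam_const_fam:
  assumes c: "\<And>x. x \<in> X \<Longrightarrow> c x \<in> carr R {1}" and s: "s \<in> carr R {1}"
  shows "fmult R (pair_one ` X) X X (proj2 (pair_one ` X)) (pid X) (tofam R X c) (const_fam R X s)
       = fmult R (pair_one ` X) (pair_one ` X) X (pid (pair_one ` X)) (proj2 (pair_one ` X))
           (const_fam R X (one R)) (tofam R (pair_one ` X) (\<lambda>p. m1 R (c (snd (prod_decode p))) s))"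
    (is "?M = ?M'")
proof
  fix x
  show "?M x = ?M' x"
  proof (cases "x \<in> X")
    case True
    have "?M x = amap R {1} {pair_one x} (point_map 1 (pair_one x)) (m1 R (c x) s)"
      using True mult_amap_point[of "c x" s "pair_one x" x] c[OF True] s
      by (simp add: fmult_def pid_comp_proj2 fib_proj2_pair_one fib_pid restrict_proj2_singleton
          tofam_apply frestr_singleton const_fam_def)
    moreover have "?M' x = amap R {1} {pair_one x} (point_map 1 (pair_one x)) (m1 R (c x) s)"
      using True mult_amap_point[of "one R" "m1 R (c x) s" "pair_one x" "pair_one x"] c[OF True] s one_carr
      by (simp add: fmult_def proj2_comp_pid fib_proj2_pair_one restrict_pid_singleton tofam_apply
          frestr_singleton const_fam_def one_m1 m1_carr)
    ultimately show ?thesis by simp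
  qed (simp add: fmult_def)
qed

lemma mult_smul_const_fam:
  assumes X: "finite X" and b: "b \<in> carr R X" and c: "\<And>x. x \<in> X \<Longrightarrow> c x \<in> carr R {1}"
    and s: "s \<in> carr R {1}"
  shows "mult R (pair_one ` X) X (proj2 (pair_one ` X)) (smul R X b c) (const_fam R X s)
       = smul R (pair_one ` X) (mult R (pair_one ` X) X (proj2 (pair_one ` X)) b (const_fam R X (one R)))
           (\<lambda>p. m1 R (c (snd (prod_decode p))) s)"
proof -
  let ?P = "pair_one ` X" and ?c' = "\<lambda>p. m1 R (c (snd (prod_decode p))) s"
  have b1: "point_fam 1 b \<in> famset R X {1} (cmap X)"
    by (rule point_fam_famset) (simp add: fib_cmap b)
  have c': "?c' p \<in> carr R {1}" if "p \<in> ?P" for p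
    using that c s by (auto simp: m1_carr)
  have "fmult R ?P X {1} (pid X \<circ>\<^sub>m proj2 ?P) (cmap X) (point_fam 1 b)
          (fmult R ?P X X (proj2 ?P) (pid X) (tofam R X c) (const_fam R X s))
      = fmult R ?P X {1} (proj2 ?P) (cmap X \<circ>\<^sub>m pid X)
          (fmult R X X {1} (pid X) (cmap X) (point_fam 1 b) (tofam R X c)) (const_fam R X s)"
    by (rule fmult_assoc)
      (auto simp: X pmap_pid pmap_cmap pmap_proj2_pair_one b1 intro!: tofam_famset c const_fam_famset s)
  then have "mult R ?P X (proj2 ?P) (smul R X b c) (const_fam R X s)
      = mult R ?P X (proj2 ?P) b (fmult R ?P X X (proj2 ?P) (pid X) (tofam R X c) (const_fam R X s))"
    by (simp add: pid_comp_proj2 cmap_comp_pid fmult_singleton cmap_comp_proj2 fib_cmap restrict_proj2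
        frestr_fmult restrict_pid frestr_tofam smul_def frestr_const_fam point_fam_eq_iff)
  also have "\<dots> = mult R ?P X (proj2 ?P) b
      (fmult R ?P ?P X (pid ?P) (proj2 ?P) (const_fam R X (one R)) (tofam R ?P ?c'))"
    by (simp add: fmult_tofam_const_fam c s)
  also have "\<dots> = smul R ?P (mult R ?P X (proj2 ?P) b (const_fam R X (one R))) ?c'"
  proof -
    have "fmult R ?P X {1} (proj2 ?P \<circ>\<^sub>m pid ?P) (cmap X) (point_fam 1 b)
            (fmult R ?P ?P X (pid ?P) (proj2 ?P) (const_fam R X (one R)) (tofam R ?P ?c'))
        = fmult R ?P ?P {1} (pid ?P) (cmap X \<circ>\<^sub>m proj2 ?P)
            (fmult R ?P X {1} (proj2 ?P) (cmap X) (point_fam 1 b) (const_fam R X (one R))) (tofam R ?P ?c')"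
      by (rule fmult_assoc)
        (auto simp: X pmap_pid pmap_cmap pmap_proj2_pair_one b1 intro!: tofam_famset c' const_fam_famset one_carr)
    then show ?thesis
      by (simp add: proj2_comp_pid cmap_comp_proj2 fmult_singleton fib_cmap restrict_proj2 frestr_fmult
          cmap_comp_pid restrict_pid frestr_tofam smul_def frestr_const_fam point_fam_eq_iff)
  qed
  finally show ?thesis .
qed

lemma m1_pairing_smul_mem:
  assumes J: "hideal R J" and s: "s \<in> carr R {1}" and X: "finite X"
    and b: "b \<in> carr R X" and d: "d \<in> carr R X"
    and c: "\<And>x. x \<in> X \<Longrightarrow> c x \<in> carr R {1}" and cJ: "\<And>x. x \<in> X \<Longrightarrow> m1 R (c x) s \<in> J"
  shows "m1 R (pairing R X (smul R X b c) d) s \<in> J"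
proof -
  let ?P = "pair_one ` X"
  have "m1 R (pairing R X (smul R X b c) d) s
      = pairing R ?P (smul R ?P (mult R ?P X (proj2 ?P) b (const_fam R X (one R)))
          (\<lambda>p. m1 R (c (snd (prod_decode p))) s)) (amap R X ?P (pair_one_map X) d)"
    by (simp add: m1_pairing_eq_pairing_pullback X smul_carr b c d s mult_smul_const_fam)
  also have "\<dots> \<in> J"
  proof (rule hidealD[OF J])
    show "mult R ?P X (proj2 ?P) b (const_fam R X (one R)) \<in> carr R ?P"
      by (rule mult_carr) (auto simp: X pmap_proj2_pair_one b const_fam_famset one_carr)
    show "amap R X ?P (pair_one_map X) d \<in> carr R ?P"
      by (rule amap_carr) (auto simp: X pbij_pair_one_map d)
  qed (auto simp: X cJ)
  finally show ?thesis .
qed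

lemma hideal_colon:
  assumes J: "hideal R J" and s: "s \<in> carr R {1}"
  shows "hideal R {x \<in> carr R {1}. m1 R x s \<in> J}"
  unfolding hideal_def
proof (intro conjI allI impI ballI)
  fix X b d c
  assume "finite X" "b \<in> carr R X" "d \<in> carr R X" "\<forall>x\<in>X. c x \<in> {x \<in> carr R {1}. m1 R x s \<in> J}"
  then show "pairing R X (smul R X b c) d \<in> {x \<in> carr R {1}. m1 R x s \<in> J}"
    using m1_pairing_smul_mem[OF J s] pairing_carr smul_carr by auto
qed blast

lemma hideal_subset_colon: "\<lbrakk>hideal R J; s \<in> carr R {1}\<rbrakk> \<Longrightarrow> J \<subseteq> {x \<in> carr R {1}. m1 R x s \<in> J}"
  using hideal_carr hideal_m1_closed m1_commute by fastforce

section \<open>Prime h-ideals\<close>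

lemma hideal_Union_chain:
  assumes C: "C \<noteq> {}" "\<forall>A\<in>C. \<forall>B\<in>C. A \<subseteq> B \<or> B \<subseteq> A" "\<forall>J\<in>C. hideal R J"
  shows "hideal R (\<Union>C)"
  unfolding hideal_def
proof (intro conjI allI impI ballI)
  show "\<Union>C \<subseteq> carr R {1}" using C(3) hideal_carr by blast
  fix X b d c
  assume X: "finite X" and b: "b \<in> carr R X" and d: "d \<in> carr R X" and c: "\<forall>x\<in>X. c x \<in> \<Union>C"
  obtain J where "J \<in> C" "\<forall>x\<in>X. c x \<in> J"
    using finite_subset_Union_chain[OF X C(1,2) c] by blast
  with C(3) X b d have "pairing R X (smul R X b c) d \<in> J" by (blast intro: hidealD)
  with \<open>J \<in> C\<close> show "pairing R X (smul R X b c) d \<in> \<Union>C" by blast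
qed

lemma hprime_gpow_mem_imp_mem:
  assumes p: "hprime R p" and a: "a \<in> carr R {1}"
  shows "gpow R a n \<in> p \<Longrightarrow> n > 0 \<Longrightarrow> a \<in> p"
proof (induction n)
  case (Suc m)
  have "m1 R a (gpow R a m) \<in> p" using Suc.prems by simp
  then have "a \<in> p \<or> gpow R a m \<in> p" using p a gpow_carr[OF a] unfolding hprime_def by blast
  then show ?case
  proof
    assume "gpow R a m \<in> p"
    with p Suc.IH show ?thesis by (cases m) (auto simp: hprime_def)
  qed
qed simp

text \<open>If u s \<in> p with u \<notin> p, the colon ideal (p : s) strictly contains p, so by maximality it
  meets the powers of a.\<close>
lemma hprime_if_maximal_avoiding_powers:
  assumes a: "a \<in> carr R {1}" and p: "hideal R p" and avoid: "\<forall>n. gpow R a n \<notin> p"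
    and max: "\<And>J. \<lbrakk>hideal R J; p \<subseteq> J; \<forall>n. gpow R a n \<notin> J\<rbrakk> \<Longrightarrow> J = p"
  shows "hprime R p"
proof -
  have colon: "\<exists>n. m1 R (gpow R a n) s \<in> p"
    if s: "s \<in> carr R {1}" and u: "u \<in> carr R {1}" "u \<notin> p" "m1 R u s \<in> p" for s u
  proof (rule ccontr)
    assume "\<nexists>n. m1 R (gpow R a n) s \<in> p"
    then have "{x \<in> carr R {1}. m1 R x s \<in> p} = p"
      by (intro max hideal_colon hideal_subset_colon p s) auto
    with u show False by blast
  qed
  show ?thesis
    unfolding hprime_def
  proof (intro conjI ballI impI)
    show "one R \<notin> p" using avoid[rule_format, of 0] by simp
    fix u v
    assume u: "u \<in> carr R {1}" and v: "v \<in> carr R {1}" and uv: "m1 R u v \<in> p"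
    show "u \<in> p \<or> v \<in> p"
    proof (rule ccontr)
      assume "\<not> (u \<in> p \<or> v \<in> p)"
      then have "u \<notin> p" "v \<notin> p" by auto
      obtain n where "m1 R (gpow R a n) v \<in> p" using colon[OF v u \<open>u \<notin> p\<close> uv] by blast
      then have "m1 R v (gpow R a n) \<in> p" using m1_commute[OF gpow_carr[OF a] v] by simp
      then obtain m where "m1 R (gpow R a m) (gpow R a n) \<in> p"
        using colon[OF gpow_carr[OF a] v \<open>v \<notin> p\<close>] by blast
      with avoid show False by (simp add: gpow_add[OF a])
    qed
  qed (rule p)
qed

lemma exists_hprime_not_mem:
  assumes I: "hideal R I" and a: "a \<in> carr R {1}" and "a \<notin> hradical R I"
  shows "\<exists>p. hprime R p \<and> I \<subseteq> p \<and> a \<notin> p"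
proof -
  define \<F> where "\<F> = {J. hideal R J \<and> I \<subseteq> J \<and> (\<forall>n. gpow R a n \<notin> J)}"
  have "gpow R a (Suc n) \<notin> I" for n
    using assms unfolding hradical_def by blast
  moreover have "one R \<notin> I"
    using hideal_carr_if_one[OF I _ a] gpow_Suc_0[OF a] \<open>gpow R a (Suc 0) \<notin> I\<close> by auto
  ultimately have "gpow R a n \<notin> I" for n
    by (cases n) auto
  with I have "I \<in> \<F>" by (simp add: \<F>_def)
  have "\<exists>M\<in>\<F>. \<forall>J\<in>\<F>. M \<subseteq> J \<longrightarrow> J = M"
  proof (rule subset_Zorn_nonempty)
    fix C assume "C \<noteq> {}" "subset.chain \<F> C"
    then show "\<Union>C \<in> \<F>"
      by (auto simp: \<F>_def subset.chain_def intro!: hideal_Union_chain)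
  qed (use \<open>I \<in> \<F>\<close> in blast)
  then obtain p where "p \<in> \<F>" and max: "\<forall>J\<in>\<F>. p \<subseteq> J \<longrightarrow> J = p" by blast
  then have p: "hideal R p" "I \<subseteq> p" "\<forall>n. gpow R a n \<notin> p" by (simp_all add: \<F>_def)
  have "J = p" if "hideal R J" "p \<subseteq> J" "\<forall>n. gpow R a n \<notin> J" for J
    using max that p(2) unfolding \<F>_def by blast
  then have "hprime R p"
    by (rule hprime_if_maximal_avoiding_powers[OF a p(1,3)])
  moreover have "a \<notin> p"
    using p(3) gpow_Suc_0[OF a] by metis
  ultimately show ?thesis using p(2) by blast
qed

lemma hradical_subset_hprime: "\<lbrakk>hprime R p; I \<subseteq> p\<rbrakk> \<Longrightarrow> hradical R I \<subseteq> p"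
  unfolding hradical_def using hprime_gpow_mem_imp_mem by blast

end

theorem lemma4p2p9:
  fixes R :: "'a gring" and I :: "'a set"
  assumes "gen_ring R" and "hideal R I"
  shows "carr R {1} \<inter> \<Inter> {p \<in> spec R. I \<subseteq> p} = hradical R I"
proof -
  interpret generalized_ring R by (rule generalized_ring.intro) (rule assms(1))
  show ?thesis
  proof
    show "carr R {1} \<inter> \<Inter> {p \<in> spec R. I \<subseteq> p} \<subseteq> hradical R I"
      using exists_hprime_not_mem[OF assms(2)] by (fastforce simp: spec_def)
    show "hradical R I \<subseteq> carr R {1} \<inter> \<Inter> {p \<in> spec R. I \<subseteq> p}"
      using hradical_subset_hprime by (auto simp: hradical_def spec_def)
  qed
qed

end
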